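(* Let $\lambda>0$, $a>0$, $\Gamma\ge0$ be real numbers with $\lambda\ge6\max\{\Gamma,1/a\}$, and let $v\in L^1(\mathbb{R})$ satisfy $|v(\xi)|\le\Gamma e^{-a|\xi|}$ for all $\xi\in\mathbb{R}$. Then there exists $\psi\in L^1(\mathbb{R})$ with $\psi=R[\psi]$ (the $L^1$-limit of the iterates $\psi_0=v$, $\psi_{n+1}=R[\psi_n]$) such that $$|\psi(\xi)|\le2\Gamma\exp\!\left(-\left(a-\frac1\lambda\right)|\xi|\right)\quad\text{for all }\xi\in\mathbb{R}.$$
   Context: Fix an infinitely differentiable $b:\mathbb{R}\to[0,1]$ with $b(\xi)=1$ for $|\xi|\le\lambda$ and $b(\xi)=0$ for $|\xi|\ge\sqrt2\lambda$. Convolution is normalized: $f*g(\xi)=\frac1{2\pi}\int f(\eta)g(\xi-\eta)\,d\eta$; $f^{*m}$ is the $m$-fold convolution. For $f\in L^1$: $W_b[f](\xi)=f(\xi)\frac{b(\xi)}{4\lambda^2-\xi^2}$, $\widetilde W_b[f](\xi)=f(\xi)\frac{i\xi\,b(\xi)}{4\lambda^2-\xi^2}$, $\exp_2^*[f]=\sum_{m\ge2}\frac{f^{*m}}{m!}$, and $R[f]=\frac14\widetilde W_b[f]*\widetilde W_b[f]-4\lambda^2\exp_2^*[W_b[f]]+v$. *)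

theory Defs
  imports "HOL-Analysis.Analysis"
begin

text \<open>Functions on the real line are complex valued; L^1 = Lebesgue integrable on lborel.\<close>

definition smooth_fun :: "(real \<Rightarrow> real) \<Rightarrow> bool" where
  "smooth_fun b \<longleftrightarrow> (\<exists>D :: nat \<Rightarrow> real \<Rightarrow> real. D 0 = b \<and>
      (\<forall>n x. (D n has_real_derivative D (Suc n) x) (at x)))"

definition conv :: "(real \<Rightarrow> complex) \<Rightarrow> (real \<Rightarrow> complex) \<Rightarrow> real \<Rightarrow> complex" where
  "conv f g = (\<lambda>\<xi>. complex_of_real (1 / (2 * pi)) * (LINT \<eta>|lborel. f \<eta> * g (\<xi> - \<eta>)))"

text \<open>m-fold convolution power, m >= 1.\<close>
fun conv_pow :: "(real \<Rightarrow> complex) \<Rightarrow> nat \<Rightarrow> real \<Rightarrow> complex" where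
  "conv_pow f 0 = (\<lambda>_. 0)"
| "conv_pow f (Suc 0) = f"
| "conv_pow f (Suc (Suc m)) = conv f (conv_pow f (Suc m))"

definition W_b :: "(real \<Rightarrow> real) \<Rightarrow> real \<Rightarrow> (real \<Rightarrow> complex) \<Rightarrow> real \<Rightarrow> complex" where
  "W_b b lam f = (\<lambda>\<xi>. f \<xi> * complex_of_real (b \<xi> / (4 * lam\<^sup>2 - \<xi>\<^sup>2)))"

definition Wt_b :: "(real \<Rightarrow> real) \<Rightarrow> real \<Rightarrow> (real \<Rightarrow> complex) \<Rightarrow> real \<Rightarrow> complex" where
  "Wt_b b lam f = (\<lambda>\<xi>. f \<xi> * (\<i> * complex_of_real (\<xi> * b \<xi>) / complex_of_real (4 * lam\<^sup>2 - \<xi>\<^sup>2)))"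

definition exp2_star :: "(real \<Rightarrow> complex) \<Rightarrow> real \<Rightarrow> complex" where
  "exp2_star f = (\<lambda>\<xi>. \<Sum>m. conv_pow f (m + 2) \<xi> / of_real (fact (m + 2)))"

definition R_map :: "(real \<Rightarrow> real) \<Rightarrow> real \<Rightarrow> (real \<Rightarrow> complex) \<Rightarrow> (real \<Rightarrow> complex) \<Rightarrow> real \<Rightarrow> complex" where
  "R_map b lam v f = (\<lambda>\<xi>. (1/4) * conv (Wt_b b lam f) (Wt_b b lam f) \<xi>
       - complex_of_real (4 * lam\<^sup>2) * exp2_star (W_b b lam f) \<xi> + v \<xi>)"

end

theory Submission
  imports Defs "HOL-Probability.Distributions"
begin

text \<open>
  Functions are measured in the weighted sup norm sup |f x| / w x with the weight
  w x = exp (- a |x|). The weight is submultiplicative, w y * w (x - y) \<le> w x, so convolving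
  with a function supported in [-L, L] costs only a factor L / pi in this norm. The cutoff
  operators W_b and Wt_b multiply by functions bounded by 1/(2 lam^2) and 1/lam and supported in
  [-2 lam, 2 lam]; hence every nonlinear term of R is small, of relative size
  P = 2 Gamma / (lam pi) \<le> 1/9. Consequently R maps the ball of functions with
  |f| \<le> 2 Gamma w into itself and contracts weighted distances by 5 P \<le> 5/9. A pointwise
  version of Banach's fixed point theorem yields the fixed point psi together with geometric
  weighted convergence of the iterates, which implies L1 convergence because w is integrable.
  The resulting bound |psi| \<le> 2 Gamma w is stronger than the one claimed.
\<close>

section \<open>The exponential weight\<close>

definition weight :: "real \<Rightarrow> real \<Rightarrow> real" where
  "weight a x = exp (- a * \<bar>x\<bar>)"

lemma weight_pos: "0 < weight a x"
  by (simp add: weight_def)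

lemma weight_nonneg [simp]: "0 \<le> weight a x"
  by (simp add: weight_def)

lemma weight_measurable [measurable]: "weight a \<in> borel_measurable borel"
  unfolding weight_def[abs_def] by measurable

text \<open>Submultiplicativity, the property behind all convolution estimates.\<close>

lemma weight_submult:
  assumes "0 \<le> a"
  shows "weight a y * weight a (x - y) \<le> weight a x"
proof -
  have "a * \<bar>x\<bar> \<le> a * (\<bar>y\<bar> + \<bar>x - y\<bar>)"
    using assms by (intro mult_left_mono) linarith+
  then show ?thesis
    by (simp add: weight_def exp_add[symmetric] algebra_simps)
qed

lemma weight_le_slower_decay:
  assumes "0 < lam"
  shows "weight a x \<le> exp (- (a - 1 / lam) * \<bar>x\<bar>)"
proof -
  have "- (a - 1 / lam) * \<bar>x\<bar> = - a * \<bar>x\<bar> + \<bar>x\<bar> / lam"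
    by (simp add: algebra_simps)
  then show ?thesis
    using assms by (simp add: weight_def)
qed

lemma weight_bound_nonneg:
  assumes "cmod z \<le> C * weight a x"
  shows "0 \<le> C"
  using assms weight_pos[of a x] norm_ge_zero[of z] by (smt (verit) mult_neg_pos)

text \<open>The weight is integrable; it is dominated by two rescaled copies of the one-sided
  exponential.\<close>

lemma integrable_exp_Ici: "integrable lborel (\<lambda>x::real. exp (- x) * indicator {0..} x)"
proof (rule integrableI_nn_integral_finite[where x = 1])
  have "(\<integral>\<^sup>+x. ennreal (exp (- x) * indicator {0..} x) \<partial>lborel)
      = (\<integral>\<^sup>+x. ennreal (x ^ 0 * exp (- x)) * indicator {0..} x \<partial>lborel)"
    by (intro nn_integral_cong) (auto simp: indicator_def)
  then show "(\<integral>\<^sup>+x. ennreal (exp (- x) * indicator {0..} x) \<partial>lborel) = ennreal 1"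
    using nn_intergal_power_times_exp_Ici[of 0] by simp
qed (auto simp: indicator_def)

lemma integrable_weight:
  assumes "0 < a"
  shows "integrable lborel (weight a)"
proof -
  let ?h = "\<lambda>x::real. exp (- x) * indicator {0..} x"
  have scaled: "integrable lborel (\<lambda>x. ?h (c * x))" if "c \<noteq> 0" for c
    using integrable_exp_Ici lborel_integrable_real_affine_iff[OF that, of ?h 0] by simp
  have both: "integrable lborel (\<lambda>x. ?h (a * x) + ?h (- a * x))"
    using scaled[of a] scaled[of "- a"] assms by (intro Bochner_Integration.integrable_add) auto
  show ?thesis
  proof (rule Bochner_Integration.integrable_bound[OF both])
    show "AE x in lborel. norm (weight a x) \<le> norm (?h (a * x) + ?h (- a * x))"
      using assms by (intro AE_I2) (auto simp: weight_def indicator_def zero_le_mult_iff mult_le_0_iff abs_if)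
  qed simp
qed

section \<open>Dominated functions and convolution\<close>

text \<open>A function is dominated by C w if it is Borel measurable and pointwise bounded by C * w:
  this is the closed ball of radius C in the weighted sup norm.\<close>

definition dominated :: "(real \<Rightarrow> real) \<Rightarrow> real \<Rightarrow> (real \<Rightarrow> complex) \<Rightarrow> bool" where
  "dominated w C f \<longleftrightarrow> f \<in> borel_measurable borel \<and> (\<forall>x. cmod (f x) \<le> C * w x)"

definition vanishes_outside :: "real \<Rightarrow> (real \<Rightarrow> complex) \<Rightarrow> bool" where
  "vanishes_outside L f \<longleftrightarrow> (\<forall>x. L < \<bar>x\<bar> \<longrightarrow> f x = 0)"

lemma dominated_zero: "0 \<le> C \<Longrightarrow> (\<forall>x. 0 \<le> w x) \<Longrightarrow> dominated w C (\<lambda>_. 0)"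
  by (simp add: dominated_def)

lemma dominated_mono: "dominated w C f \<Longrightarrow> C \<le> C' \<Longrightarrow> (\<forall>x. 0 \<le> w x) \<Longrightarrow> dominated w C' f"
  unfolding dominated_def by (meson mult_right_mono order_trans)

lemma dominated_weight_nonneg: "dominated (weight a) C f \<Longrightarrow> 0 \<le> C"
  unfolding dominated_def using weight_bound_nonneg by blast

lemma conv_measurable [measurable]:
  assumes [measurable]: "f \<in> borel_measurable borel" "g \<in> borel_measurable borel"
  shows "conv f g \<in> borel_measurable borel"
  unfolding conv_def by measurable

lemma conv_zero_left: "conv (\<lambda>_. 0) g = (\<lambda>_. 0)"
  by (simp add: conv_def)

lemma indicator_Icc_abs: "\<not> L < \<bar>y :: real\<bar> \<Longrightarrow> indicator {-L..L} y = (1::real)"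
  using abs_le_iff[of y L] by (simp add: indicator_def not_less)

text \<open>The integrand of a convolution with a compactly supported factor is dominated by a
  multiple of the indicator of the support, thanks to submultiplicativity of the weight.\<close>

lemma conv_integrand_integrable:
  assumes "0 \<le> a" and f: "dominated (weight a) A f" "vanishes_outside L f"
    and g: "dominated (weight a) B g"
  shows "integrable lborel (\<lambda>y. f y * g (x - y))"
proof (rule Bochner_Integration.integrable_bound)
  show "integrable lborel (\<lambda>y. A * B * weight a x * indicator {-L..L} y)"
    by (intro integrable_mult_right integrable_real_indicator) (auto simp: emeasure_lborel_Icc_eq)
  have [measurable]: "f \<in> borel_measurable borel" "g \<in> borel_measurable borel"
    using f g by (auto simp: dominated_def)
  show "(\<lambda>y. f y * g (x - y)) \<in> borel_measurable lborel"
    by measurable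
  have A: "0 \<le> A" and B: "0 \<le> B"
    using f g by (auto intro: dominated_weight_nonneg)
  have "norm (f y * g (x - y)) \<le> A * B * weight a x * indicator {-L..L} y" for y
  proof (cases "L < \<bar>y\<bar>")
    case True
    then show ?thesis using f by (auto simp: vanishes_outside_def indicator_def)
  next
    case False
    have "norm (f y * g (x - y)) \<le> (A * weight a y) * (B * weight a (x - y))"
      unfolding norm_mult using f g A by (intro mult_mono) (auto simp: dominated_def)
    also have "\<dots> = A * B * (weight a y * weight a (x - y))"
      by (simp add: ac_simps)
    also have "\<dots> \<le> A * B * weight a x"
      using weight_submult[OF \<open>0 \<le> a\<close>] A B by (intro mult_left_mono) auto
    finally have "norm (f y * g (x - y)) \<le> A * B * weight a x" .
    then show ?thesis
      using indicator_Icc_abs[OF False] by simp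
  qed
  then show "AE y in lborel. norm (f y * g (x - y)) \<le> norm (A * B * weight a x * indicator {-L..L} y)"
    by (intro AE_I2) (smt (verit) norm_ge_zero real_norm_def)
qed

lemma conv_lipschitz:
  assumes "0 \<le> a" "0 \<le> L"
    and f1: "dominated (weight a) A1 f1" "vanishes_outside L f1"
    and f2: "dominated (weight a) A2 f2" "vanishes_outside L f2"
    and g1: "dominated (weight a) B1 g1" and g2: "dominated (weight a) B2 g2"
    and f12: "\<forall>y. cmod (f1 y - f2 y) \<le> D * weight a y"
    and g12: "\<forall>y. cmod (g1 y - g2 y) \<le> E * weight a y"
  shows "cmod (conv f1 g1 x - conv f2 g2 x) \<le> (D * B1 + A2 * E) * (L / pi) * weight a x"
proof -
  have int1: "integrable lborel (\<lambda>y. f1 y * g1 (x - y))"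
    and int2: "integrable lborel (\<lambda>y. f2 y * g2 (x - y))"
    using conv_integrand_integrable assms by blast+
  have B1: "0 \<le> B1" and A2: "0 \<le> A2"
    using g1 f2 by (auto intro: dominated_weight_nonneg)
  have D: "0 \<le> D" and E: "0 \<le> E"
    using f12 g12 weight_bound_nonneg by blast+
  let ?K = "(D * B1 + A2 * E) * weight a x"
  have pointwise: "norm (f1 y * g1 (x - y) - f2 y * g2 (x - y)) \<le> ?K * indicator {-L..L} y" for y
  proof (cases "L < \<bar>y\<bar>")
    case True
    then show ?thesis using f1 f2 B1 A2 D E by (auto simp: vanishes_outside_def indicator_def)
  next
    case False
    have "f1 y * g1 (x - y) - f2 y * g2 (x - y)
        = (f1 y - f2 y) * g1 (x - y) + f2 y * (g1 (x - y) - g2 (x - y))"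
      by (simp add: algebra_simps)
    then have "norm (f1 y * g1 (x - y) - f2 y * g2 (x - y))
        \<le> norm (f1 y - f2 y) * norm (g1 (x - y)) + norm (f2 y) * norm (g1 (x - y) - g2 (x - y))"
      by (metis norm_mult norm_triangle_ineq)
    also have "\<dots> \<le> (D * weight a y) * (B1 * weight a (x - y)) + (A2 * weight a y) * (E * weight a (x - y))"
      using f12 g1 f2 g12 D A2 by (intro add_mono mult_mono) (auto simp: dominated_def)
    also have "\<dots> = (D * B1 + A2 * E) * (weight a y * weight a (x - y))"
      by (simp add: algebra_simps)
    also have "\<dots> \<le> ?K"
      using weight_submult[OF \<open>0 \<le> a\<close>] B1 A2 D E by (intro mult_left_mono) auto
    finally show ?thesis
      using indicator_Icc_abs[OF False] by simp
  qed
  have "conv f1 g1 x - conv f2 g2 x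
      = complex_of_real (1 / (2 * pi)) * (LINT y|lborel. f1 y * g1 (x - y) - f2 y * g2 (x - y))"
    by (simp add: conv_def Bochner_Integration.integral_diff[OF int1 int2] algebra_simps)
  then have "cmod (conv f1 g1 x - conv f2 g2 x)
      = cmod (LINT y|lborel. f1 y * g1 (x - y) - f2 y * g2 (x - y)) / (2 * pi)"
    by (simp add: norm_divide norm_mult)
  also have "\<dots> \<le> (LINT y|lborel. ?K * indicator {-L..L} y) / (2 * pi)"
  proof (intro divide_right_mono)
    show "cmod (LINT y|lborel. f1 y * g1 (x - y) - f2 y * g2 (x - y))
        \<le> (LINT y|lborel. ?K * indicator {-L..L} y)"
      by (rule Bochner_Integration.integral_norm_bound_integral[OF Bochner_Integration.integrable_diff[OF int1 int2]
            _ pointwise])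
        (intro integrable_mult_right integrable_real_indicator, auto simp: emeasure_lborel_Icc_eq)
  qed simp
  also have "\<dots> = (D * B1 + A2 * E) * (L / pi) * weight a x"
    using \<open>0 \<le> L\<close> by (simp add: field_simps)
  finally show ?thesis .
qed

lemma conv_bound:
  assumes "0 \<le> a" "0 \<le> L"
    and f: "dominated (weight a) A f" "vanishes_outside L f"
    and g: "dominated (weight a) B g"
  shows "cmod (conv f g x) \<le> A * B * (L / pi) * weight a x"
proof -
  have zero: "dominated (weight a) 0 (\<lambda>_. 0)" "vanishes_outside L (\<lambda>_. 0)"
    by (simp_all add: dominated_zero vanishes_outside_def)
  have "\<forall>y. cmod (f y - 0) \<le> A * weight a y" "\<forall>y. cmod (g y - 0) \<le> B * weight a y"
    using f(1) g by (simp_all add: dominated_def)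
  from conv_lipschitz[OF assms(1,2) f zero g zero(1) this]
  show ?thesis by (simp add: conv_zero_left)
qed

lemma dominated_integrable:
  assumes "integrable lborel w" and "dominated w C f"
  shows "integrable lborel f"
proof (rule Bochner_Integration.integrable_bound[OF integrable_mult_right[OF assms(1), of C]])
  show "f \<in> borel_measurable lborel"
    using assms(2) by (simp add: dominated_def)
  show "AE x in lborel. norm (f x) \<le> norm (C * w x)"
    using assms(2) by (intro AE_I2) (auto simp: dominated_def intro: order_trans[OF _ abs_ge_self])
qed

section \<open>Convolution powers and the series exp2_star\<close>

lemma conv_pow_dominated:
  assumes "0 \<le> a" "0 \<le> L" and f: "dominated (weight a) A f" "vanishes_outside L f"
  shows "dominated (weight a) (A * (A * L / pi) ^ m) (conv_pow f (Suc m))"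
proof (induction m)
  case 0
  then show ?case using f by simp
next
  case (Suc m)
  have "cmod (conv f (conv_pow f (Suc m)) x) \<le> A * (A * (A * L / pi) ^ m) * (L / pi) * weight a x" for x
    by (rule conv_bound[OF assms Suc])
  moreover have "conv f (conv_pow f (Suc m)) \<in> borel_measurable borel"
    using f(1) Suc by (intro conv_measurable) (auto simp: dominated_def)
  ultimately show ?case
    by (simp add: dominated_def field_simps)
qed

lemma conv_pow_lipschitz:
  assumes "0 \<le> a" "0 \<le> L"
    and f: "dominated (weight a) A f" "vanishes_outside L f"
    and g: "dominated (weight a) A g" "vanishes_outside L g"
    and fg: "\<forall>x. cmod (f x - g x) \<le> D * weight a x"
  shows "\<forall>x. cmod (conv_pow f (Suc m) x - conv_pow g (Suc m) x)
           \<le> real (Suc m) * D * (A * L / pi) ^ m * weight a x"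
proof (induction m)
  case 0
  then show ?case using fg by simp
next
  case (Suc m)
  have "cmod (conv f (conv_pow f (Suc m)) x - conv g (conv_pow g (Suc m)) x)
      \<le> (D * (A * (A * L / pi) ^ m) + A * (real (Suc m) * D * (A * L / pi) ^ m)) * (L / pi) * weight a x"
    for x
    by (rule conv_lipschitz[OF assms(1,2) f g conv_pow_dominated[OF assms(1,2) f]
          conv_pow_dominated[OF assms(1,2) g] fg Suc])
  then show ?case
    by (simp add: field_simps)
qed

lemma summable_half_geometric_bound:
  fixes c :: "nat \<Rightarrow> complex"
  assumes "\<forall>m. cmod (c m) \<le> K * (1/2) ^ m"
  shows "summable c" and "cmod (suminf c) \<le> 2 * K"
proof -
  have geom: "summable (\<lambda>m. K * (1/2::real) ^ m)"
    by (intro summable_mult summable_geometric) simp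
  have norms: "summable (\<lambda>m. norm (c m))"
    by (rule summable_comparison_test[OF _ geom]) (use assms in auto)
  then show "summable c"
    by (rule summable_norm_cancel)
  have "cmod (suminf c) \<le> (\<Sum>m. norm (c m))"
    by (rule summable_norm[OF norms])
  also have "\<dots> \<le> (\<Sum>m. K * (1/2::real) ^ m)"
    by (rule suminf_le[OF _ norms geom]) (use assms in auto)
  also have "\<dots> = 2 * K"
    by (simp add: suminf_mult suminf_geometric)
  finally show "cmod (suminf c) \<le> 2 * K" .
qed

lemma power_Suc_le_half_geometric: "0 \<le> t \<Longrightarrow> t \<le> 1/2 \<Longrightarrow> t ^ Suc m \<le> t * (1/2::real) ^ m"
  by (simp add: mult_left_mono power_mono)

lemma exp2_star_term_bound:
  assumes "0 \<le> a" "0 \<le> L" and f: "dominated (weight a) A f" "vanishes_outside L f"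
    and small: "A * L / pi \<le> 1/2"
  shows "cmod (conv_pow f (m + 2) x / of_real (fact (m + 2)))
           \<le> (A * (A * L / pi) * weight a x / 2) * (1/2) ^ m"
proof -
  let ?t = "A * L / pi"
  have A: "0 \<le> A" using f(1) by (rule dominated_weight_nonneg)
  have t: "0 \<le> ?t" using A \<open>0 \<le> L\<close> by simp
  have "cmod (conv_pow f (Suc (Suc m)) x) \<le> A * ?t ^ Suc m * weight a x"
    using conv_pow_dominated[OF assms(1-4), of "Suc m"] by (simp add: dominated_def)
  also have "\<dots> \<le> A * (?t * (1/2) ^ m) * weight a x"
    using power_Suc_le_half_geometric[OF t small] A by (intro mult_right_mono mult_left_mono) auto
  finally have num: "cmod (conv_pow f (m + 2) x) \<le> A * ?t * weight a x * (1/2) ^ m"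
    by (simp add: ac_simps)
  have fact: "(2::real) \<le> fact (m + 2)"
    using fact_ge_self[of "m + 2"] by (metis add_leD2 of_nat_fact of_nat_le_iff of_nat_numeral)
  have "0 \<le> A * ?t * weight a x * (1/2) ^ m"
    by (intro mult_nonneg_nonneg zero_le_power weight_nonneg A t) simp
  then have "cmod (conv_pow f (m + 2) x) / fact (m + 2) \<le> (A * ?t * weight a x * (1/2) ^ m) / 2"
    using num fact by (intro frac_le) auto
  then show ?thesis
    unfolding norm_divide norm_of_real by simp
qed

lemma exp2_star_dominated:
  assumes "0 \<le> a" "0 \<le> L" and f: "dominated (weight a) A f" "vanishes_outside L f"
    and small: "A * L / pi \<le> 1/2"
  shows "dominated (weight a) (A * (A * L / pi)) (exp2_star f)"
proof -
  define c where "c x m = conv_pow f (m + 2) x / of_real (fact (m + 2))" for x m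
  have "\<forall>m. cmod (c x m) \<le> (A * (A * L / pi) * weight a x / 2) * (1/2) ^ m" for x
    unfolding c_def using exp2_star_term_bound[OF assms] by blast
  note sum = summable_half_geometric_bound[OF this]
  have "conv_pow f (m + 2) \<in> borel_measurable borel" for m
    using conv_pow_dominated[OF assms(1-4), of "Suc m"] by (simp add: dominated_def)
  then have [measurable]: "(\<lambda>x. c x m) \<in> borel_measurable borel" for m
    unfolding c_def by measurable
  have "(\<lambda>x. suminf (c x)) \<in> borel_measurable borel"
    by (rule borel_measurable_LIMSEQ_metric[where f = "\<lambda>n x. \<Sum>m<n. c x m"])
      (use sum(1) summable_LIMSEQ in auto)
  then show ?thesis
    using sum(2) by (auto simp: dominated_def exp2_star_def c_def[abs_def])
qed

lemma exp2_star_lipschitz: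
  assumes "0 \<le> a" "0 \<le> L"
    and f: "dominated (weight a) A f" "vanishes_outside L f"
    and g: "dominated (weight a) A g" "vanishes_outside L g"
    and fg: "\<forall>x. cmod (f x - g x) \<le> D * weight a x" and small: "A * L / pi \<le> 1/2"
  shows "cmod (exp2_star f x - exp2_star g x) \<le> 2 * D * (A * L / pi) * weight a x"
proof -
  let ?t = "A * L / pi"
  have t: "0 \<le> ?t" using dominated_weight_nonneg[OF f(1)] \<open>0 \<le> L\<close> by simp
  have D: "0 \<le> D" using fg weight_bound_nonneg by blast
  define cf where "cf m = conv_pow f (m + 2) x / of_real (fact (m + 2))" for m
  define cg where "cg m = conv_pow g (m + 2) x / of_real (fact (m + 2))" for m
  have diff_bound: "cmod (cf m - cg m) \<le> (D * ?t * weight a x) * (1/2) ^ m" for m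
  proof -
    have num: "cmod (conv_pow f (m + 2) x - conv_pow g (m + 2) x) \<le> real (m + 2) * (D * ?t ^ Suc m * weight a x)"
      using conv_pow_lipschitz[OF assms(1-7), of "Suc m"] by (simp add: ac_simps)
    have fact: "real (m + 2) \<le> fact (m + 2)"
      by (metis fact_ge_self of_nat_fact of_nat_le_iff)
    have nonneg: "0 \<le> real (m + 2) * (D * ?t ^ Suc m * weight a x)"
      by (intro mult_nonneg_nonneg zero_le_power weight_nonneg D t) simp
    have diff: "cf m - cg m = (conv_pow f (m + 2) x - conv_pow g (m + 2) x) / of_real (fact (m + 2))"
      by (simp add: cf_def cg_def diff_divide_distrib)
    have "cmod (cf m - cg m) = cmod (conv_pow f (m + 2) x - conv_pow g (m + 2) x) / fact (m + 2)"
      unfolding diff norm_divide norm_of_real by simp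
    also have "\<dots> \<le> real (m + 2) * (D * ?t ^ Suc m * weight a x) / real (m + 2)"
      by (rule frac_le[OF nonneg num _ fact]) simp
    also have "\<dots> = D * ?t ^ Suc m * weight a x"
      by simp
    also have "\<dots> \<le> D * (?t * (1/2) ^ m) * weight a x"
      using power_Suc_le_half_geometric[OF t small, of m] D by (intro mult_right_mono mult_left_mono) auto
    finally show ?thesis
      by (simp add: ac_simps)
  qed
  have "summable cf" "summable cg"
    unfolding cf_def cg_def
    using exp2_star_term_bound[OF assms(1-4) small] exp2_star_term_bound[OF assms(1,2) g small]
    by (blast intro: summable_half_geometric_bound)+
  then have "exp2_star f x - exp2_star g x = (\<Sum>m. cf m - cg m)"
    unfolding exp2_star_def cf_def[symmetric] cg_def[symmetric] by (simp add: suminf_diff)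
  also have "cmod \<dots> \<le> 2 * (D * ?t * weight a x)"
    using summable_half_geometric_bound(2)[of "\<lambda>m. cf m - cg m"] diff_bound by blast
  finally show ?thesis by simp
qed

section \<open>Multipliers and the cutoff operators\<close>

lemma multiplier_dominated:
  assumes f: "dominated w C f" and m: "m \<in> borel_measurable borel" and bound: "\<forall>x. cmod (m x) \<le> K"
  shows "dominated w (C * K) (\<lambda>x. f x * m x)"
  unfolding dominated_def
proof (intro conjI allI)
  show "(\<lambda>x. f x * m x) \<in> borel_measurable borel"
    using f m by (auto simp: dominated_def)
  fix x
  have "cmod (f x) \<le> C * w x" using f by (simp add: dominated_def)
  then have "cmod (f x) * cmod (m x) \<le> C * w x * K"
    using bound by (intro mult_mono) (auto intro: order.trans[OF norm_ge_zero])
  then show "cmod (f x * m x) \<le> C * K * w x"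
    by (simp add: norm_mult ac_simps)
qed

lemma multiplier_lipschitz:
  assumes bound: "\<forall>x. cmod (m x) \<le> K" and fg: "\<forall>x. cmod (f x - g x) \<le> D * w x"
  shows "\<forall>x. cmod (f x * m x - g x * m x) \<le> D * K * w x"
proof
  fix x
  have "cmod (f x * m x - g x * m x) = cmod (f x - g x) * cmod (m x)"
    by (simp add: norm_mult left_diff_distrib[symmetric])
  also have "\<dots> \<le> D * w x * K"
    using fg bound by (intro mult_mono) (auto intro: order.trans[OF norm_ge_zero])
  finally show "cmod (f x * m x - g x * m x) \<le> D * K * w x"
    by (simp add: ac_simps)
qed

lemma multiplier_vanishes_outside:
  "\<forall>x. L < \<bar>x\<bar> \<longrightarrow> m x = 0 \<Longrightarrow> vanishes_outside L (\<lambda>x. f x * m x)"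
  by (simp add: vanishes_outside_def)

text \<open>Smoothness of the cutoff is used only to know that it is Borel measurable.\<close>

lemma smooth_fun_borel_measurable:
  assumes "smooth_fun b"
  shows "b \<in> borel_measurable borel"
proof -
  obtain D where "D 0 = b" and "\<forall>n x. (D n has_real_derivative D (Suc n) x) (at x)"
    using assms unfolding smooth_fun_def by blast
  then have "continuous_on UNIV b"
    by (metis DERIV_isCont continuous_at_imp_continuous_on)
  then show ?thesis
    by (rule borel_measurable_continuous_onI)
qed

context
  fixes lam :: real and b :: "real \<Rightarrow> real"
  assumes lam: "0 < lam" and b_measurable: "b \<in> borel_measurable borel"
    and b_range: "\<forall>\<xi>. 0 \<le> b \<xi> \<and> b \<xi> \<le> 1"
    and b_support: "\<forall>\<xi>. \<bar>\<xi>\<bar> \<ge> sqrt 2 * lam \<longrightarrow> b \<xi> = 0"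
begin

text \<open>On the support of the cutoff the denominator stays away from zero:
  4 lam^2 - xi^2 \<ge> 2 lam^2 and |xi| \<le> 2 lam.\<close>

lemma cutoff_support: "b \<xi> \<noteq> 0 \<Longrightarrow> \<bar>\<xi>\<bar> < sqrt 2 * lam"
  using b_support by force

lemma cutoff_support_square: "b \<xi> \<noteq> 0 \<Longrightarrow> \<xi>\<^sup>2 < 2 * lam\<^sup>2"
proof -
  assume "b \<xi> \<noteq> 0"
  then have "\<bar>\<xi>\<bar>\<^sup>2 < (sqrt 2 * lam)\<^sup>2"
    using cutoff_support by (intro power_strict_mono) auto
  then show ?thesis by (simp add: power_mult_distrib)
qed

lemma cutoff_support_abs: "b \<xi> \<noteq> 0 \<Longrightarrow> \<bar>\<xi>\<bar> \<le> 2 * lam"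
proof -
  assume "b \<xi> \<noteq> 0"
  moreover have "sqrt 2 * lam \<le> 2 * lam"
    using lam by (intro mult_right_mono real_le_lsqrt) auto
  ultimately show ?thesis
    using cutoff_support[of \<xi>] by linarith
qed

lemma W_multiplier_bound: "cmod (complex_of_real (b \<xi> / (4 * lam\<^sup>2 - \<xi>\<^sup>2))) \<le> 1 / (2 * lam\<^sup>2)"
proof (cases "b \<xi> = 0")
  case False
  then have denom: "2 * lam\<^sup>2 \<le> 4 * lam\<^sup>2 - \<xi>\<^sup>2"
    using cutoff_support_square[OF False] by simp
  have pos: "0 < 4 * lam\<^sup>2 - \<xi>\<^sup>2"
    using denom lam by (smt (verit) zero_less_power2)
  have "cmod (complex_of_real (b \<xi> / (4 * lam\<^sup>2 - \<xi>\<^sup>2))) = b \<xi> / (4 * lam\<^sup>2 - \<xi>\<^sup>2)"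
    unfolding norm_of_real using b_range pos by (intro abs_of_nonneg divide_nonneg_pos) auto
  also have "\<dots> \<le> 1 / (2 * lam\<^sup>2)"
    using b_range denom lam by (intro frac_le) auto
  finally show ?thesis .
qed simp

lemma Wt_multiplier_bound:
  "cmod (\<i> * complex_of_real (\<xi> * b \<xi>) / complex_of_real (4 * lam\<^sup>2 - \<xi>\<^sup>2)) \<le> 1 / lam"
proof (cases "b \<xi> = 0")
  case False
  then have denom: "2 * lam\<^sup>2 \<le> 4 * lam\<^sup>2 - \<xi>\<^sup>2" and xi: "\<bar>\<xi>\<bar> \<le> 2 * lam"
    using cutoff_support_square[OF False] cutoff_support_abs[OF False] by auto
  have pos: "0 < 4 * lam\<^sup>2 - \<xi>\<^sup>2"
    using denom lam by (smt (verit) zero_less_power2)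
  have "cmod (\<i> * complex_of_real (\<xi> * b \<xi>) / complex_of_real (4 * lam\<^sup>2 - \<xi>\<^sup>2))
      = \<bar>\<xi>\<bar> * b \<xi> / (4 * lam\<^sup>2 - \<xi>\<^sup>2)"
    using b_range pos
    by (simp only: norm_divide norm_mult norm_ii norm_of_real abs_mult mult_1_left abs_of_pos)
      simp
  also have "\<dots> \<le> (2 * lam) * 1 / (2 * lam\<^sup>2)"
    using b_range xi denom lam by (intro frac_le mult_mono) auto
  also have "\<dots> = 1 / lam"
    using lam by (simp add: power2_eq_square)
  finally show ?thesis .
qed (use lam in simp)

lemma cutoff_vanishes: "2 * lam < \<bar>\<xi>\<bar> \<Longrightarrow> b \<xi> = 0"
  using cutoff_support_abs by fastforce

lemma W_b_dominated:
  assumes "dominated w C f"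
  shows "dominated w (C / (2 * lam\<^sup>2)) (W_b b lam f)"
proof -
  have "(\<lambda>\<xi>. complex_of_real (b \<xi> / (4 * lam\<^sup>2 - \<xi>\<^sup>2))) \<in> borel_measurable borel"
    using b_measurable by measurable
  from multiplier_dominated[OF assms this allI[OF W_multiplier_bound]]
  show ?thesis by (simp add: W_b_def)
qed

lemma Wt_b_dominated:
  assumes "dominated w C f"
  shows "dominated w (C / lam) (Wt_b b lam f)"
proof -
  have "(\<lambda>\<xi>. \<i> * complex_of_real (\<xi> * b \<xi>) / complex_of_real (4 * lam\<^sup>2 - \<xi>\<^sup>2))
      \<in> borel_measurable borel"
    using b_measurable by measurable
  from multiplier_dominated[OF assms this allI[OF Wt_multiplier_bound]]
  show ?thesis by (simp add: Wt_b_def)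
qed

lemma W_b_lipschitz:
  "\<forall>x. cmod (f x - g x) \<le> D * w x \<Longrightarrow>
    \<forall>x. cmod (W_b b lam f x - W_b b lam g x) \<le> D / (2 * lam\<^sup>2) * w x"
  unfolding W_b_def using multiplier_lipschitz[OF allI[OF W_multiplier_bound]] by simp

lemma Wt_b_lipschitz:
  "\<forall>x. cmod (f x - g x) \<le> D * w x \<Longrightarrow>
    \<forall>x. cmod (Wt_b b lam f x - Wt_b b lam g x) \<le> D / lam * w x"
  unfolding Wt_b_def using multiplier_lipschitz[OF allI[OF Wt_multiplier_bound]] by simp

lemma W_b_vanishes: "vanishes_outside (2 * lam) (W_b b lam f)"
  unfolding W_b_def by (rule multiplier_vanishes_outside) (simp add: cutoff_vanishes)

lemma Wt_b_vanishes: "vanishes_outside (2 * lam) (Wt_b b lam f)"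
  unfolding Wt_b_def by (rule multiplier_vanishes_outside) (simp add: cutoff_vanishes)

end

section \<open>The map R on the ball of radius 2 Gamma\<close>

lemma norm_R_shape:
  fixes c e u :: complex and k :: real
  assumes "0 \<le> k"
  shows "cmod ((1/4) * c - complex_of_real k * e + u) \<le> (1/4) * cmod c + k * cmod e + cmod u"
proof -
  have "cmod ((1/4) * c - complex_of_real k * e + u) \<le> cmod ((1/4) * c - complex_of_real k * e) + cmod u"
    by (rule norm_triangle_ineq)
  also have "\<dots> \<le> cmod ((1/4) * c) + cmod (complex_of_real k * e) + cmod u"
    by (intro add_right_mono norm_triangle_ineq4)
  finally show ?thesis
    using assms by (simp add: norm_mult)
qed

context
  fixes lam a \<Gamma> :: real and b :: "real \<Rightarrow> real" and v :: "real \<Rightarrow> complex"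
  assumes lam: "0 < lam" and b_measurable: "b \<in> borel_measurable borel"
    and b_range: "\<forall>\<xi>. 0 \<le> b \<xi> \<and> b \<xi> \<le> 1"
    and b_support: "\<forall>\<xi>. \<bar>\<xi>\<bar> \<ge> sqrt 2 * lam \<longrightarrow> b \<xi> = 0"
    and a: "0 \<le> a" and \<Gamma>: "6 * \<Gamma> \<le> lam"
    and v: "dominated (weight a) \<Gamma> v"
begin

text \<open>The basic smallness parameter of the problem; all nonlinear terms of R carry it.\<close>

lemma smallness: "2 * \<Gamma> / (lam * pi) \<le> 1/9"
proof -
  have "2 * \<Gamma> * 9 \<le> lam * 3" using \<Gamma> by simp
  also have "\<dots> \<le> lam * pi" using pi_gt3 lam by (intro mult_left_mono) auto
  finally show ?thesis using lam by (simp add: field_simps)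
qed

lemmas W_b_facts = W_b_dominated[OF lam b_measurable b_range b_support]
  W_b_lipschitz[OF lam b_measurable b_range b_support] W_b_vanishes[OF lam b_measurable b_range b_support]

lemmas Wt_b_facts = Wt_b_dominated[OF lam b_measurable b_range b_support]
  Wt_b_lipschitz[OF lam b_measurable b_range b_support] Wt_b_vanishes[OF lam b_measurable b_range b_support]

lemma R_map_inputs:
  assumes f: "dominated (weight a) (2 * \<Gamma>) f"
  shows "dominated (weight a) (2 * \<Gamma> / lam) (Wt_b b lam f)"
    and "dominated (weight a) (\<Gamma> / lam\<^sup>2) (W_b b lam f)"
  using Wt_b_facts(1)[OF f] W_b_facts(1)[OF f] lam by (simp_all add: power2_eq_square)

text \<open>For the W_b term the parameter t = A * L / pi of the exp2_star estimates equals the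
  smallness parameter, so those estimates apply.\<close>

lemma exp2_smallness: "\<Gamma> / lam\<^sup>2 * (2 * lam) / pi \<le> 1/2"
proof -
  have "\<Gamma> / lam\<^sup>2 * (2 * lam) / pi = 2 * \<Gamma> / (lam * pi)"
    using lam by (simp add: power2_eq_square)
  then show ?thesis using smallness by simp
qed

text \<open>R maps the ball of radius 2 Gamma into itself: its nonlinear part contributes at most
  5 Gamma P \<le> Gamma, and the source v at most Gamma.\<close>

lemma R_map_self_map:
  assumes f: "dominated (weight a) (2 * \<Gamma>) f"
  shows "dominated (weight a) (2 * \<Gamma>) (R_map b lam v f)"
proof -
  define P where "P = 2 * \<Gamma> / (lam * pi)"
  have L: "0 \<le> 2 * lam" using lam by simp
  note Wt = R_map_inputs(1)[OF f] Wt_b_facts(3)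
  note W = R_map_inputs(2)[OF f] W_b_facts(3)
  have conv_term: "cmod (conv (Wt_b b lam f) (Wt_b b lam f) x) \<le> 4 * \<Gamma> * P * weight a x" for x
    using conv_bound[OF a L Wt Wt(1), of x] lam by (simp add: P_def power2_eq_square field_simps)
  have exp_term: "dominated (weight a) (\<Gamma> * P / lam\<^sup>2) (exp2_star (W_b b lam f))"
    using exp2_star_dominated[OF a L W exp2_smallness] lam by (simp add: P_def power2_eq_square field_simps)
  have [measurable]: "Wt_b b lam f \<in> borel_measurable borel" "exp2_star (W_b b lam f) \<in> borel_measurable borel"
      "v \<in> borel_measurable borel"
    using Wt exp_term v by (simp_all add: dominated_def)
  have "cmod (R_map b lam v f x) \<le> 2 * \<Gamma> * weight a x" for x
  proof -
    have "cmod (R_map b lam v f x) \<le> (1/4) * cmod (conv (Wt_b b lam f) (Wt_b b lam f) x)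
        + (4 * lam\<^sup>2) * cmod (exp2_star (W_b b lam f) x) + cmod (v x)"
      unfolding R_map_def by (rule norm_R_shape) simp
    also have "\<dots> \<le> (1/4) * (4 * \<Gamma> * P * weight a x) + (4 * lam\<^sup>2) * (\<Gamma> * P / lam\<^sup>2 * weight a x)
        + \<Gamma> * weight a x"
      using conv_term[of x] exp_term v by (intro add_mono mult_left_mono) (auto simp: dominated_def)
    also have "\<dots> = (5 * P + 1) * \<Gamma> * weight a x"
      using lam by (simp add: field_simps)
    also have "\<dots> \<le> 2 * \<Gamma> * weight a x"
      using smallness dominated_weight_nonneg[OF v] by (intro mult_right_mono) (auto simp: P_def)
    finally show ?thesis .
  qed
  moreover have "R_map b lam v f \<in> borel_measurable borel"
    unfolding R_map_def by measurable
  ultimately show ?thesis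
    by (simp add: dominated_def)
qed

lemma R_map_contraction:
  assumes f: "dominated (weight a) (2 * \<Gamma>) f" and g: "dominated (weight a) (2 * \<Gamma>) g"
    and fg: "\<forall>x. cmod (f x - g x) \<le> \<delta> * weight a x"
  shows "cmod (R_map b lam v f x - R_map b lam v g x) \<le> 5/9 * \<delta> * weight a x"
proof -
  define P where "P = 2 * \<Gamma> / (lam * pi)"
  have L: "0 \<le> 2 * lam" using lam by simp
  have \<delta>: "0 \<le> \<delta>" using fg weight_bound_nonneg by blast
  note Wtf = R_map_inputs(1)[OF f] Wt_b_facts(3) and Wtg = R_map_inputs(1)[OF g] Wt_b_facts(3)
  note Wf = R_map_inputs(2)[OF f] W_b_facts(3) and Wg = R_map_inputs(2)[OF g] W_b_facts(3)
  have conv_diff: "cmod (conv (Wt_b b lam f) (Wt_b b lam f) x - conv (Wt_b b lam g) (Wt_b b lam g) x)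
      \<le> 4 * \<delta> * P * weight a x"
    using conv_lipschitz[OF a L Wtf Wtg Wtf(1) Wtg(1) Wt_b_facts(2)[OF fg] Wt_b_facts(2)[OF fg], of x]
      lam by (simp add: P_def power2_eq_square field_simps)
  have exp_diff: "cmod (exp2_star (W_b b lam f) x - exp2_star (W_b b lam g) x)
      \<le> \<delta> * P / lam\<^sup>2 * weight a x"
    using exp2_star_lipschitz[OF a L Wf Wg W_b_facts(2)[OF fg] exp2_smallness, of x]
      lam by (simp add: P_def power2_eq_square field_simps)
  txt \<open>The difference has the shape of R with source term 0.\<close>
  have eq: "R_map b lam v f x - R_map b lam v g x
      = (1/4) * (conv (Wt_b b lam f) (Wt_b b lam f) x - conv (Wt_b b lam g) (Wt_b b lam g) x)
        - complex_of_real (4 * lam\<^sup>2) * (exp2_star (W_b b lam f) x - exp2_star (W_b b lam g) x) + 0"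
    unfolding R_map_def by (simp add: algebra_simps)
  have "cmod (R_map b lam v f x - R_map b lam v g x)
      \<le> (1/4) * cmod (conv (Wt_b b lam f) (Wt_b b lam f) x - conv (Wt_b b lam g) (Wt_b b lam g) x)
        + (4 * lam\<^sup>2) * cmod (exp2_star (W_b b lam f) x - exp2_star (W_b b lam g) x) + cmod 0"
    unfolding eq by (rule norm_R_shape) simp
  also have "\<dots> \<le> (1/4) * (4 * \<delta> * P * weight a x)
      + (4 * lam\<^sup>2) * (\<delta> * P / lam\<^sup>2 * weight a x) + 0"
    using conv_diff exp_diff by (intro add_mono mult_left_mono) simp_all
  also have "\<dots> = 5 * P * \<delta> * weight a x"
    using lam by (simp add: field_simps)
  also have "\<dots> \<le> 5/9 * \<delta> * weight a x"
    using smallness \<delta> by (intro mult_right_mono) (auto simp: P_def)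
  finally show ?thesis .
qed

end

section \<open>Banach's fixed point argument in a weighted sup norm\<close>

lemma geometric_tail_bound:
  fixes d :: "nat \<Rightarrow> complex"
  assumes bound: "\<forall>n. cmod (d n) \<le> C * q ^ n" and q: "0 \<le> q" "q < 1"
  shows "summable d" and "cmod ((\<Sum>k<n. d k) - suminf d) \<le> C * q ^ n / (1 - q)"
proof -
  have geom: "summable (\<lambda>k. C * q ^ n * q ^ k)" for n
    using q by (intro summable_mult summable_geometric) simp
  have norms: "summable (\<lambda>k. norm (d k))"
    by (rule summable_comparison_test[OF _ geom[of 0]]) (use bound in simp)
  then show "summable d"
    by (rule summable_norm_cancel)
  have tail_norms: "summable (\<lambda>k. norm (d (k + n)))"
    using summable_ignore_initial_segment[OF norms, of n] by simp
  have "suminf d = (\<Sum>k. d (k + n)) + (\<Sum>k<n. d k)"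
    by (rule suminf_split_initial_segment[OF \<open>summable d\<close>])
  then have "cmod ((\<Sum>k<n. d k) - suminf d) = cmod (\<Sum>k. d (k + n))"
    by (simp add: norm_minus_commute)
  also have "\<dots> \<le> (\<Sum>k. norm (d (k + n)))"
    by (rule summable_norm[OF tail_norms])
  also have "\<dots> \<le> (\<Sum>k. C * q ^ n * q ^ k)"
  proof (rule suminf_le[OF _ tail_norms geom])
    fix k
    have "norm (d (k + n)) \<le> C * q ^ (k + n)"
      using bound by blast
    then show "norm (d (k + n)) \<le> C * q ^ n * q ^ k"
      by (simp add: power_add ac_simps)
  qed
  also have "\<dots> = C * q ^ n / (1 - q)"
    using q by (simp add: suminf_mult suminf_geometric divide_simps)
  finally show "cmod ((\<Sum>k<n. d k) - suminf d) \<le> C * q ^ n / (1 - q)" .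
qed

lemma geometric_convergence:
  fixes u :: "nat \<Rightarrow> 'a :: real_normed_vector"
  assumes "\<And>n. norm (u n - l) \<le> K * q ^ n" and "0 \<le> q" "q < 1"
  shows "u \<longlonglongrightarrow> l"
proof (rule LIM_zero_cancel, rule Lim_null_comparison)
  show "\<forall>\<^sub>F n in sequentially. norm (u n - l) \<le> K * q ^ n"
    using assms(1) by simp
  show "(\<lambda>n. K * q ^ n) \<longlonglongrightarrow> 0"
    using assms(2,3) by (intro tendsto_mult_right_zero LIMSEQ_power_zero) auto
qed

lemma weighted_geometric_limit:
  fixes u :: "nat \<Rightarrow> real \<Rightarrow> complex"
  assumes steps: "\<And>n x. cmod (u (Suc n) x - u n x) \<le> C * q ^ n * w x" and q: "0 \<le> q" "q < 1"
  shows "\<exists>\<psi>. \<forall>n x. cmod (u n x - \<psi> x) \<le> C / (1 - q) * q ^ n * w x"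
proof (intro exI allI)
  fix n x
  have telescope: "u n x = u 0 x + (\<Sum>k<n. u (Suc k) x - u k x)"
    using sum_lessThan_telescope[of "\<lambda>k. u k x" n] by simp
  have "\<forall>k. cmod (u (Suc k) x - u k x) \<le> (C * w x) * q ^ k"
    using steps by (simp add: ac_simps)
  from geometric_tail_bound(2)[OF this q, of n]
  show "cmod (u n x - (u 0 x + (\<Sum>k. u (Suc k) x - u k x))) \<le> C / (1 - q) * q ^ n * w x"
    by (subst telescope) (simp add: ac_simps)
qed

lemma contraction_iterate_steps:
  fixes T :: "(real \<Rightarrow> complex) \<Rightarrow> real \<Rightarrow> complex" and w :: "real \<Rightarrow> real"
  assumes start: "dominated w M v"
    and invariant: "\<And>f. dominated w M f \<Longrightarrow> dominated w M (T f)"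
    and contraction: "\<And>f g \<delta> x. dominated w M f \<Longrightarrow> dominated w M g \<Longrightarrow>
      \<forall>y. cmod (f y - g y) \<le> \<delta> * w y \<Longrightarrow> cmod (T f x - T g x) \<le> q * \<delta> * w x"
  shows "\<forall>x. cmod ((T ^^ Suc n) v x - (T ^^ n) v x) \<le> 2 * M * q ^ n * w x"
proof (induction n)
  case 0
  have "cmod (T v x - v x) \<le> M * w x + M * w x" for x
    using start invariant[OF start]
    by (intro order_trans[OF norm_triangle_ineq4] add_mono) (simp_all add: dominated_def)
  then show ?case by (simp add: mult.assoc)
next
  case (Suc n)
  have iterates: "dominated w M ((T ^^ k) v)" for k
    by (induction k) (simp_all add: start invariant)
  have "cmod (T ((T ^^ Suc n) v) x - T ((T ^^ n) v) x) \<le> q * (2 * M * q ^ n) * w x" for x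
    using iterates[of "Suc n"] iterates[of n] Suc by (intro contraction) simp_all
  then show ?case by (simp add: ac_simps)
qed

lemma weighted_contraction_fixed_point:
  fixes T :: "(real \<Rightarrow> complex) \<Rightarrow> real \<Rightarrow> complex" and w :: "real \<Rightarrow> real"
  assumes start: "dominated w M v"
    and invariant: "\<And>f. dominated w M f \<Longrightarrow> dominated w M (T f)"
    and contraction: "\<And>f g \<delta> x. dominated w M f \<Longrightarrow> dominated w M g \<Longrightarrow>
      \<forall>y. cmod (f y - g y) \<le> \<delta> * w y \<Longrightarrow> cmod (T f x - T g x) \<le> q * \<delta> * w x"
    and q: "0 \<le> q" "q < 1"
  shows "\<exists>\<psi>. dominated w M \<psi> \<and> T \<psi> = \<psi> \<and> (\<forall>n. dominated w M ((T ^^ n) v)) \<and>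
    (\<forall>n x. cmod ((T ^^ n) v x - \<psi> x) \<le> 2 * M / (1 - q) * q ^ n * w x)"
proof -
  define u where "u n = (T ^^ n) v" for n
  have u_dominated: "dominated w M (u n)" for n
    by (induction n) (simp_all add: u_def start invariant)
  have steps: "cmod (u (Suc n) x - u n x) \<le> 2 * M * q ^ n * w x" for n x
    using contraction_iterate_steps[where T = T and w = w and M = M and v = v and q = q,
        OF start invariant contraction]
    unfolding u_def by blast
  obtain \<psi> where error: "\<And>n x. cmod (u n x - \<psi> x) \<le> 2 * M / (1 - q) * q ^ n * w x"
    using weighted_geometric_limit[where u = u and C = "2 * M" and w = w, OF steps q] by blast
  have limit: "(\<lambda>n. u n x) \<longlonglongrightarrow> \<psi> x" for x
    using error q by (intro geometric_convergence[where K = "2 * M / (1 - q) * w x"]) (simp_all add: ac_simps)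
  have \<psi>_dominated: "dominated w M \<psi>"
    unfolding dominated_def
  proof
    show "\<psi> \<in> borel_measurable borel"
      by (rule borel_measurable_LIMSEQ_metric[of u]) (use u_dominated limit in \<open>auto simp: dominated_def\<close>)
    show "\<forall>x. cmod (\<psi> x) \<le> M * w x"
      using u_dominated
      by (intro allI tendsto_le[OF trivial_limit_sequentially tendsto_const tendsto_norm[OF limit]])
        (simp add: dominated_def)
  qed
  have "T \<psi> x = \<psi> x" for x
  proof (rule LIMSEQ_unique)
    show "(\<lambda>n. u (Suc n) x) \<longlonglongrightarrow> \<psi> x"
      using limit by (rule LIMSEQ_Suc)
    have "cmod (T (u n) x - T \<psi> x) \<le> q * (2 * M / (1 - q) * q ^ n) * w x" for n
      using u_dominated \<psi>_dominated error by (intro contraction) auto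
    then show "(\<lambda>n. u (Suc n) x) \<longlonglongrightarrow> T \<psi> x"
      using q by (intro geometric_convergence[where K = "q * 2 * M / (1 - q) * w x"])
        (simp_all add: u_def ac_simps)
  qed
  then show ?thesis
    using \<psi>_dominated u_dominated error by (auto simp: u_def)
qed

lemma weighted_convergence_imp_L1:
  fixes f :: "nat \<Rightarrow> real \<Rightarrow> complex"
  assumes w: "integrable lborel w"
    and measurable: "\<And>n. f n \<in> borel_measurable borel" "\<psi> \<in> borel_measurable borel"
    and bound: "\<And>n x. cmod (f n x - \<psi> x) \<le> c n * w x" and c: "c \<longlonglongrightarrow> 0"
  shows "(\<lambda>n. LINT x|lborel. cmod (f n x - \<psi> x)) \<longlonglongrightarrow> 0"
proof (rule tendsto_sandwich[of "\<lambda>_. 0" _ _ "\<lambda>n. c n * (LINT x|lborel. w x)"])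
  have "(LINT x|lborel. cmod (f n x - \<psi> x)) \<le> (LINT x|lborel. c n * w x)" for n
  proof (rule integral_mono)
    show "integrable lborel (\<lambda>x. cmod (f n x - \<psi> x))"
      using measurable bound
      by (intro Bochner_Integration.integrable_bound[OF integrable_mult_right[OF w, of "c n"]] AE_I2)
        (auto intro: order_trans[OF _ abs_ge_self])
  qed (use w bound in auto)
  then show "\<forall>\<^sub>F n in sequentially. (LINT x|lborel. cmod (f n x - \<psi> x)) \<le> c n * (LINT x|lborel. w x)"
    by simp
  show "(\<lambda>n. c n * (LINT x|lborel. w x)) \<longlonglongrightarrow> 0"
    using c by (rule tendsto_mult_left_zero)
qed simp_all

theorem theorem7p5:
  fixes lam a \<Gamma> :: real and b :: "real \<Rightarrow> real" and v :: "real \<Rightarrow> complex"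
  assumes "lam > 0" and "a > 0" and "\<Gamma> \<ge> 0"
    and "lam \<ge> 6 * max \<Gamma> (1 / a)"
    and "smooth_fun b" and "\<forall>\<xi>. 0 \<le> b \<xi> \<and> b \<xi> \<le> 1"
    and "\<forall>\<xi>. \<bar>\<xi>\<bar> \<le> lam \<longrightarrow> b \<xi> = 1"
    and "\<forall>\<xi>. \<bar>\<xi>\<bar> \<ge> sqrt 2 * lam \<longrightarrow> b \<xi> = 0"
    and "integrable lborel v"
    and "\<forall>\<xi>. cmod (v \<xi>) \<le> \<Gamma> * exp (- a * \<bar>\<xi>\<bar>)"
  shows "\<exists>\<psi> :: real \<Rightarrow> complex. integrable lborel \<psi>
     \<and> (AE \<xi> in lborel. \<psi> \<xi> = R_map b lam v \<psi> \<xi>)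
     \<and> ((\<lambda>n. LINT \<xi>|lborel. cmod (((R_map b lam v) ^^ n) v \<xi> - \<psi> \<xi>)) \<longlonglongrightarrow> 0)
     \<and> (\<forall>\<xi>. cmod (\<psi> \<xi>) \<le> 2 * \<Gamma> * exp (- (a - 1 / lam) * \<bar>\<xi>\<bar>))"
proof -
  note setting = assms(1) smooth_fun_borel_measurable[OF assms(5)] assms(6,8)
  have a: "0 \<le> a" and \<Gamma>: "6 * \<Gamma> \<le> lam" and q: "0 \<le> (5/9::real)" "(5/9::real) < 1"
    using assms(2,4) by auto
  have v: "dominated (weight a) \<Gamma> v"
    using borel_measurable_integrable[OF assms(9)] assms(10) by (simp add: dominated_def weight_def)
  then have v': "dominated (weight a) (2 * \<Gamma>) v"
    using dominated_mono assms(3) by fastforce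
  obtain \<psi> where \<psi>: "dominated (weight a) (2 * \<Gamma>) \<psi>" and fixed: "R_map b lam v \<psi> = \<psi>"
    and iterates: "\<forall>n. dominated (weight a) (2 * \<Gamma>) ((R_map b lam v ^^ n) v)"
    and error: "\<forall>n \<xi>. cmod ((R_map b lam v ^^ n) v \<xi> - \<psi> \<xi>)
      \<le> 2 * (2 * \<Gamma>) / (1 - 5/9) * (5/9) ^ n * weight a \<xi>"
    using weighted_contraction_fixed_point[where T = "R_map b lam v", OF v'
        R_map_self_map[OF setting a \<Gamma> v] R_map_contraction[OF setting a \<Gamma> v] q]
    by blast
  have "(\<lambda>n. LINT \<xi>|lborel. cmod ((R_map b lam v ^^ n) v \<xi> - \<psi> \<xi>)) \<longlonglongrightarrow> 0"
  proof (rule weighted_convergence_imp_L1[OF integrable_weight[OF assms(2)]])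
    show "(\<lambda>n. 2 * (2 * \<Gamma>) / (1 - 5/9) * (5/9) ^ n) \<longlonglongrightarrow> 0"
      by (intro tendsto_mult_right_zero LIMSEQ_power_zero) simp
  qed (use iterates \<psi> error in \<open>simp_all add: dominated_def\<close>)
  moreover have "cmod (\<psi> \<xi>) \<le> 2 * \<Gamma> * exp (- (a - 1 / lam) * \<bar>\<xi>\<bar>)" for \<xi>
    using \<psi> weight_le_slower_decay[OF assms(1), of a \<xi>] assms(3)
    unfolding dominated_def by (meson mult_left_mono order_trans zero_le_numeral zero_le_mult_iff)
  ultimately show ?thesis
    using dominated_integrable[OF integrable_weight[OF assms(2)] \<psi>] fixed by auto
qed

end
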